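(* Let $G$ be a finite simple graph, $L \subseteq V(G)$, $R = V(G) \setminus L$, and $v \in L$. Let $M_v$ be a matching in $G$ each of whose edges joins a vertex of $N_R(v)$ to a vertex of $T^2_L(v)$. Then $\mathrm{pp}^2_L(v) \geq |N_L(v)| + |M_v|$, and equality holds if $M_v$ is a maximum matching among all such matchings (i.e., a maximum matching of the bipartite graph with sides $N_R(v)$ and $T^2_L(v)$ and all edges of $G$ between them).
   Context: All graphs are finite and simple. For a partition $V(G) = L \cup R$ and a vertex $v$, $N_L(v) = N(v) \cap L$ and $N_R(v) = N(v) \cap R$, and $T^2_L(v) = \{x \in L \setminus (N(v) \cup \{v\}) : N_R(x) \cap N(v) \neq \emptyset\}$, i.e. the vertices of $L$ other than $v$, not adjacent to $v$, reachable from $v$ by a path of length two whose middle vertex lies in $R$. For a vertex $v$ and a set $X \subseteq V(G)$, an $(r,X)$-path packing rooted at $v$ is a family $\mathcal P$ of paths such that: every path has length at least $1$ and at most $r$; every path starts at $v$ and ends at a vertex of $X \setminus \{v\}$; the paths are pairwise vertex-disjoint except for the common start vertex $v$; and no interior vertex of any path lies in $X$. Let $\mathrm{pp}^r_X(v)$ denote the maximum size of an $(r,X)$-path packing rooted at $v$. *)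

theory Defs
  imports Main
begin

definition simple_graph :: "'a set \<Rightarrow> ('a \<Rightarrow> 'a \<Rightarrow> bool) \<Rightarrow> bool" where
  "simple_graph V E \<longleftrightarrow> finite V \<and> (\<forall>x y. E x y \<longrightarrow> E y x)
     \<and> (\<forall>x. \<not> E x x) \<and> (\<forall>x y. E x y \<longrightarrow> x \<in> V \<and> y \<in> V)"

definition nbhd :: "('a \<Rightarrow> 'a \<Rightarrow> bool) \<Rightarrow> 'a \<Rightarrow> 'a set" where
  "nbhd E v = {x. E v x}"

definition nbhd_in :: "('a \<Rightarrow> 'a \<Rightarrow> bool) \<Rightarrow> 'a set \<Rightarrow> 'a \<Rightarrow> 'a set" where
  "nbhd_in E S v = nbhd E v \<inter> S"

definition T2 :: "'a set \<Rightarrow> ('a \<Rightarrow> 'a \<Rightarrow> bool) \<Rightarrow> 'a set \<Rightarrow> 'a \<Rightarrow> 'a set" where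
  "T2 V E L v = {x \<in> L - (nbhd E v \<union> {v}). nbhd_in E (V - L) x \<inter> nbhd E v \<noteq> {}}"

text \<open>A path is a nonempty list of distinct vertices, consecutive ones adjacent;
its length is the number of edges, i.e. length of the list minus one.\<close>
definition is_path :: "'a set \<Rightarrow> ('a \<Rightarrow> 'a \<Rightarrow> bool) \<Rightarrow> 'a list \<Rightarrow> bool" where
  "is_path V E p \<longleftrightarrow> p \<noteq> [] \<and> distinct p \<and> set p \<subseteq> V
     \<and> (\<forall>i. Suc i < length p \<longrightarrow> E (p ! i) (p ! Suc i))"

definition path_packing :: "'a set \<Rightarrow> ('a \<Rightarrow> 'a \<Rightarrow> bool) \<Rightarrow> nat \<Rightarrow> 'a set \<Rightarrow> 'a \<Rightarrow> 'a list set \<Rightarrow> bool" where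
  "path_packing V E r X v P \<longleftrightarrow>
     (\<forall>p \<in> P. is_path V E p \<and> 1 \<le> length p - 1 \<and> length p - 1 \<le> r
        \<and> hd p = v \<and> last p \<in> X - {v}
        \<and> set (butlast (tl p)) \<inter> X = {})
   \<and> (\<forall>p \<in> P. \<forall>q \<in> P. p \<noteq> q \<longrightarrow> set p \<inter> set q \<subseteq> {v})"

definition pp :: "'a set \<Rightarrow> ('a \<Rightarrow> 'a \<Rightarrow> bool) \<Rightarrow> nat \<Rightarrow> 'a set \<Rightarrow> 'a \<Rightarrow> nat" where
  "pp V E r X v = Max {card P | P. path_packing V E r X v P}"

definition matching_between :: "('a \<Rightarrow> 'a \<Rightarrow> bool) \<Rightarrow> 'a set \<Rightarrow> 'a set \<Rightarrow> 'a set set \<Rightarrow> bool" where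
  "matching_between E A B M \<longleftrightarrow>
     (\<forall>e \<in> M. \<exists>x \<in> A. \<exists>y \<in> B. E x y \<and> e = {x, y})
   \<and> (\<forall>e \<in> M. \<forall>f \<in> M. e \<noteq> f \<longrightarrow> e \<inter> f = {})"

end

theory Submission
  imports Defs
begin

text \<open>A path of length at most two from v that meets L only at its end is either an edge vx
with x in N_L(v), or a detour v y x with y in N_R(v) and x in L; if x is not adjacent to v, then
x lies in T^2_L(v) and {y, x} is an edge between N_R(v) and T^2_L(v). The paths of a packing have
pairwise disjoint tails, so the paths ending in N(v) are counted by their endpoints, which lie in
N_L(v), while the tails of the remaining detours form a matching; this bounds pp by
|N_L(v)| + |M| for a maximum matching M. Conversely, the edges vx with x in N_L(v) together with
the detours through the edges of any such matching form a packing.\<close>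

lemma is_path_edge: "is_path V E p \<Longrightarrow> Suc i < length p \<Longrightarrow> E (p ! i) (p ! Suc i)"
  unfolding is_path_def by blast

lemma is_path_pair: "E a b \<Longrightarrow> a \<noteq> b \<Longrightarrow> a \<in> V \<Longrightarrow> b \<in> V \<Longrightarrow> is_path V E [a, b]"
  unfolding is_path_def by (auto simp: nth_Cons' less_Suc_eq)

lemma is_path_triple:
  "E a b \<Longrightarrow> E b c \<Longrightarrow> distinct [a, b, c] \<Longrightarrow> a \<in> V \<Longrightarrow> b \<in> V \<Longrightarrow> c \<in> V
   \<Longrightarrow> is_path V E [a, b, c]"
  unfolding is_path_def by (auto simp: nth_Cons' less_Suc_eq numeral_3_eq_3)

definition packing_path :: "'a set \<Rightarrow> ('a \<Rightarrow> 'a \<Rightarrow> bool) \<Rightarrow> nat \<Rightarrow> 'a set \<Rightarrow> 'a \<Rightarrow> 'a list \<Rightarrow> bool"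
  where "packing_path V E r X v p \<longleftrightarrow> is_path V E p \<and> 1 \<le> length p - 1 \<and> length p - 1 \<le> r
     \<and> hd p = v \<and> last p \<in> X - {v} \<and> set (butlast (tl p)) \<inter> X = {}"

lemma packing_path_tl:
  assumes "packing_path V E r X v p"
  shows "p = v # tl p" "v \<notin> set (tl p)" "last p \<in> set (tl p)" "set (tl p) \<subseteq> V"
proof -
  have p: "p \<noteq> []" "distinct p" "hd p = v" "set p \<subseteq> V" "2 \<le> length p"
    using assms unfolding packing_path_def is_path_def by auto
  then show p_eq: "p = v # tl p" by (cases p) auto
  show "v \<notin> set (tl p)" using p(2) p_eq by (metis distinct.simps(2))
  have "tl p \<noteq> []" using p(5) by (cases p) auto
  then show "last p \<in> set (tl p)" by (metis last_in_set last_tl)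
  show "set (tl p) \<subseteq> V" using p(4) p_eq by (metis set_subset_Cons subset_trans)
qed

lemma path_packing_iff:
  "path_packing V E r X v P \<longleftrightarrow> (\<forall>p \<in> P. packing_path V E r X v p)
     \<and> (\<forall>p \<in> P. \<forall>q \<in> P. p \<noteq> q \<longrightarrow> set (tl p) \<inter> set (tl q) = {})"
proof -
  have tl_disjoint: "set p \<inter> set q \<subseteq> {v} \<longleftrightarrow> set (tl p) \<inter> set (tl q) = {}"
    if p: "packing_path V E r X v p" and q: "packing_path V E r X v q" for p q
  proof -
    have "set p = insert v (set (tl p))" "set q = insert v (set (tl q))"
      by (subst packing_path_tl(1)[OF p], simp, subst packing_path_tl(1)[OF q], simp)
    then show ?thesis using packing_path_tl(2)[OF p] packing_path_tl(2)[OF q] by auto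
  qed
  have "path_packing V E r X v P \<longleftrightarrow> (\<forall>p \<in> P. packing_path V E r X v p)
     \<and> (\<forall>p \<in> P. \<forall>q \<in> P. p \<noteq> q \<longrightarrow> set p \<inter> set q \<subseteq> {v})"
    unfolding path_packing_def packing_path_def by (rule refl)
  with tl_disjoint show ?thesis by blast
qed

lemma path_packing_empty: "path_packing V E r X v {}"
  unfolding path_packing_def by simp

lemma path_packing_memberD:
  assumes "path_packing V E r X v P" "p \<in> P"
  shows "packing_path V E r X v p"
  using assms unfolding path_packing_iff by blast

lemma path_packing_tl_disjoint:
  assumes "path_packing V E r X v P" "p \<in> P" "q \<in> P" "p \<noteq> q"
  shows "set (tl p) \<inter> set (tl q) = {}"
  using assms unfolding path_packing_iff by blast

lemma path_packing_subset: "path_packing V E r X v P \<Longrightarrow> Q \<subseteq> P \<Longrightarrow> path_packing V E r X v Q"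
  unfolding path_packing_def by blast

lemma path_packing_Un:
  assumes "path_packing V E r X v P" "path_packing V E r X v Q"
    and "\<And>p q. p \<in> P \<Longrightarrow> q \<in> Q \<Longrightarrow> set (tl p) \<inter> set (tl q) = {}"
  shows "path_packing V E r X v (P \<union> Q)"
  using assms unfolding path_packing_iff by (metis Int_commute Un_iff)

lemma path_packing_inj_on_last:
  assumes "path_packing V E r X v P"
  shows "inj_on last P"
proof (rule inj_onI)
  fix p q assume pq: "p \<in> P" "q \<in> P" "last p = last q"
  have "last p \<in> set (tl p) \<inter> set (tl q)"
    using packing_path_tl(3)[OF path_packing_memberD[OF assms pq(1)]]
      packing_path_tl(3)[OF path_packing_memberD[OF assms pq(2)]] pq(3) by simp
  then show "p = q" using path_packing_tl_disjoint[OF assms pq(1,2)] by auto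
qed

lemma path_packing_inj_on_set_tl:
  assumes "path_packing V E r X v P"
  shows "inj_on (\<lambda>p. set (tl p)) P"
proof (rule inj_onI)
  fix p q assume pq: "p \<in> P" "q \<in> P" "set (tl p) = set (tl q)"
  have "last p \<in> set (tl p) \<inter> set (tl q)"
    using packing_path_tl(3)[OF path_packing_memberD[OF assms pq(1)]] pq(3) by simp
  then show "p = q" using path_packing_tl_disjoint[OF assms pq(1,2)] by auto
qed

lemma path_packing_card_le:
  assumes "finite V" "path_packing V E r X v P"
  shows "finite P" "card P \<le> card V"
proof -
  have last_in_V: "last ` P \<subseteq> V"
  proof
    fix x assume "x \<in> last ` P"
    then obtain p where "p \<in> P" "x = last p" by blast
    then show "x \<in> V"
      using packing_path_tl(3,4)[OF path_packing_memberD[OF assms(2)]] by blast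
  qed
  have inj: "inj_on last P" using path_packing_inj_on_last[OF assms(2)] .
  show "finite P" using finite_imageD[OF finite_subset[OF last_in_V assms(1)] inj] .
  show "card P \<le> card V" using card_inj_on_le[OF inj last_in_V assms(1)] .
qed

lemma finite_card_path_packings:
  assumes "finite V"
  shows "finite {card P | P. path_packing V E r X v P}"
proof (rule finite_subset)
  show "{card P | P. path_packing V E r X v P} \<subseteq> {..card V}"
    using path_packing_card_le(2)[OF assms] by auto
qed simp

lemma pp_ge:
  assumes "finite V" "path_packing V E r X v P"
  shows "card P \<le> pp V E r X v"
proof -
  have "card P \<in> {card P | P. path_packing V E r X v P}" using assms(2) by blast
  then show ?thesis unfolding pp_def by (rule Max_ge[OF finite_card_path_packings[OF assms(1)]])
qed

lemma pp_attained:
  assumes "finite V"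
  obtains P where "path_packing V E r X v P" "pp V E r X v = card P"
proof -
  have "{card P | P. path_packing V E r X v P} \<noteq> {}" using path_packing_empty[of V E r X v] by auto
  then have "pp V E r X v \<in> {card P | P. path_packing V E r X v P}"
    unfolding pp_def by (rule Max_in[OF finite_card_path_packings[OF assms]])
  then show ?thesis using that by auto
qed

lemma matching_between_edgeD:
  "matching_between E A B M \<Longrightarrow> e \<in> M \<Longrightarrow> \<exists>x \<in> A. \<exists>y \<in> B. E x y \<and> e = {x, y}"
  unfolding matching_between_def by (elim conjE) (rule bspec)

lemma matching_between_disjointD:
  "matching_between E A B M \<Longrightarrow> e \<in> M \<Longrightarrow> f \<in> M \<Longrightarrow> e \<noteq> f \<Longrightarrow> e \<inter> f = {}"
  unfolding matching_between_def by (elim conjE) simp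

lemma matching_between_disjoint_nbhd_in:
  assumes "matching_between E (nbhd_in E (V - L) v) (T2 V E L v) M" "e \<in> M"
  shows "e \<inter> nbhd_in E L v = {}"
proof -
  obtain y x where "y \<in> nbhd_in E (V - L) v" "x \<in> T2 V E L v" "e = {y, x}"
    using matching_between_edgeD[OF assms] by blast
  then show ?thesis unfolding T2_def nbhd_in_def by auto
qed

lemma packing_path_2_cases:
  assumes p: "packing_path V E 2 X v p"
  shows "(\<exists>x. p = [v, x] \<and> E v x \<and> x \<in> X)
    \<or> (\<exists>y x. p = [v, y, x] \<and> E v y \<and> E y x \<and> y \<notin> X \<and> x \<in> X \<and> x \<noteq> v)"
proof -
  have path: "is_path V E p" and last: "last p \<in> X - {v}"
    and inner: "set (butlast (tl p)) \<inter> X = {}"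
    using p unfolding packing_path_def by blast+
  have "length (tl p) = 1 \<or> length (tl p) = 2" using p unfolding packing_path_def by auto
  with packing_path_tl(1)[OF p] consider x where "p = [v, x]" | y x where "p = [v, y, x]"
    by (metis (no_types) One_nat_def length_0_conv length_Suc_conv numeral_2_eq_2)
  then show ?thesis
  proof cases
    case (1 x)
    have "E v x" using is_path_edge[OF path, of 0] 1 by simp
    then show ?thesis using 1 last by simp
  next
    case (2 y x)
    have "E v y" "E y x" using is_path_edge[OF path, of 0] is_path_edge[OF path, of 1] 2 by simp_all
    then show ?thesis using 2 last inner by simp
  qed
qed

context
  fixes V :: "'a set" and E :: "'a \<Rightarrow> 'a \<Rightarrow> bool"
  assumes graph: "simple_graph V E"
begin

lemma edge_sym: "E x y \<Longrightarrow> E y x"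
  and edge_irrefl: "\<not> E x x"
  and edge_in_V: "E x y \<Longrightarrow> x \<in> V \<and> y \<in> V"
  using graph unfolding simple_graph_def by blast+

lemma finite_V: "finite V"
  using graph unfolding simple_graph_def by blast

lemma finite_nbhd: "finite (nbhd E v)"
proof (rule finite_subset[OF _ finite_V])
  show "nbhd E v \<subseteq> V" using edge_in_V unfolding nbhd_def by blast
qed

lemma packing_path_2_iff:
  "packing_path V E 2 X v p \<longleftrightarrow>
     (\<exists>x. p = [v, x] \<and> E v x \<and> x \<in> X)
   \<or> (\<exists>y x. p = [v, y, x] \<and> E v y \<and> E y x \<and> y \<notin> X \<and> x \<in> X \<and> x \<noteq> v)"
  (is "_ \<longleftrightarrow> ?shapes")
proof
  show "packing_path V E 2 X v p \<Longrightarrow> ?shapes" by (rule packing_path_2_cases)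
next
  assume ?shapes
  then consider x where "p = [v, x]" "E v x" "x \<in> X"
    | y x where "p = [v, y, x]" "E v y" "E y x" "y \<notin> X" "x \<in> X" "x \<noteq> v"
    by blast
  then show "packing_path V E 2 X v p"
  proof cases
    case (1 x)
    have "v \<noteq> x" using 1 edge_irrefl by blast
    then show ?thesis using 1 edge_in_V[of v x] is_path_pair[of E v x V] unfolding packing_path_def by simp
  next
    case (2 y x)
    have "distinct [v, y, x]" using 2 edge_irrefl by auto
    then show ?thesis using 2 edge_in_V[of v y] edge_in_V[of y x] is_path_triple[of E v y x V]
      unfolding packing_path_def by simp
  qed
qed

lemma packing_path_detour_edge:
  assumes "packing_path V E 2 L v p" "\<not> E v (last p)"
  shows "\<exists>y \<in> nbhd_in E (V - L) v. \<exists>x \<in> T2 V E L v. E y x \<and> set (tl p) = {y, x}"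
proof -
  obtain y x where yx: "p = [v, y, x]" "E v y" "E y x" "y \<notin> L" "x \<in> L" "x \<noteq> v" "\<not> E v x"
    using assms unfolding packing_path_2_iff by auto
  have "y \<in> nbhd_in E (V - L) v" using yx edge_in_V[of v y] unfolding nbhd_in_def nbhd_def by simp
  moreover have "x \<in> T2 V E L v"
    using yx edge_in_V[of v y] edge_sym[of y x] unfolding T2_def nbhd_in_def nbhd_def by auto
  ultimately show ?thesis using yx by auto
qed

lemma matching_of_detour_tails:
  assumes P: "path_packing V E 2 L v P" and avoid: "\<forall>p \<in> P. \<not> E v (last p)"
  shows "matching_between E (nbhd_in E (V - L) v) (T2 V E L v) ((\<lambda>p. set (tl p)) ` P)"
  unfolding matching_between_def
proof (intro conjI ballI impI)
  fix e assume "e \<in> (\<lambda>p. set (tl p)) ` P"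
  then obtain p where "p \<in> P" "e = set (tl p)" by blast
  then show "\<exists>y \<in> nbhd_in E (V - L) v. \<exists>x \<in> T2 V E L v. E y x \<and> e = {y, x}"
    using packing_path_detour_edge[OF path_packing_memberD[OF P]] avoid by blast
next
  fix e f assume "e \<in> (\<lambda>p. set (tl p)) ` P" "f \<in> (\<lambda>p. set (tl p)) ` P" "e \<noteq> f"
  then obtain p q where "p \<in> P" "q \<in> P" "p \<noteq> q" "e = set (tl p)" "f = set (tl q)" by blast
  then show "e \<inter> f = {}" using path_packing_tl_disjoint[OF P] by blast
qed

lemma path_packing_card_le_matching:
  assumes P: "path_packing V E 2 L v P"
  obtains M where "matching_between E (nbhd_in E (V - L) v) (T2 V E L v) M"
    and "card P \<le> card (nbhd_in E L v) + card M"
proof -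
  define D where "D = {p \<in> P. \<not> E v (last p)}"
  have D_subset: "D \<subseteq> P" unfolding D_def by blast
  have "matching_between E (nbhd_in E (V - L) v) (T2 V E L v) ((\<lambda>p. set (tl p)) ` D)"
    using matching_of_detour_tails[OF path_packing_subset[OF P D_subset]] unfolding D_def by blast
  moreover have "card (P - D) \<le> card (nbhd_in E L v)"
  proof (rule card_inj_on_le)
    show "inj_on last (P - D)" using path_packing_inj_on_last[OF P] by (rule inj_on_subset) blast
    show "last ` (P - D) \<subseteq> nbhd_in E L v"
      using path_packing_memberD[OF P] unfolding D_def nbhd_in_def nbhd_def packing_path_def by auto
    show "finite (nbhd_in E L v)" using finite_nbhd unfolding nbhd_in_def by blast
  qed
  moreover have "card ((\<lambda>p. set (tl p)) ` D) = card D"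
    using inj_on_subset[OF path_packing_inj_on_set_tl[OF P] D_subset] by (rule card_image)
  moreover have "card P = card D + card (P - D)"
    using card_Int_Diff[OF path_packing_card_le(1)[OF finite_V P], of D] D_subset
    by (simp add: Int_absorb1)
  ultimately show ?thesis using that by simp
qed

lemma path_packing_direct: "path_packing V E 2 L v ((\<lambda>u. [v, u]) ` nbhd_in E L v)"
  unfolding path_packing_iff packing_path_2_iff by (auto simp: nbhd_in_def nbhd_def)

lemma path_packing_detours_of_matching:
  assumes M: "matching_between E (nbhd_in E (V - L) v) (T2 V E L v) M"
  shows "\<exists>f. path_packing V E 2 L v (f ` M) \<and> (\<forall>e \<in> M. set (tl (f e)) = e)"
proof -
  obtain y x where
    yx: "\<And>e. e \<in> M \<Longrightarrow> y e \<in> nbhd_in E (V - L) v \<and> x e \<in> T2 V E L v \<and> E (y e) (x e)"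
    and edge: "\<And>e. e \<in> M \<Longrightarrow> e = {y e, x e}"
    using matching_between_edgeD[OF M] by metis
  define f where "f e = [v, y e, x e]" for e
  have tails: "set (tl (f e)) = e" if "e \<in> M" for e
    unfolding f_def by simp (rule sym[OF edge[OF that]])
  have "packing_path V E 2 L v (f e)" if "e \<in> M" for e
    using yx[OF that] unfolding f_def packing_path_2_iff nbhd_in_def nbhd_def T2_def by auto
  moreover have "set (tl p) \<inter> set (tl q) = {}"
    if p: "p \<in> f ` M" and q: "q \<in> f ` M" and pq: "p \<noteq> q" for p q
  proof -
    obtain e e' where "e \<in> M" "e' \<in> M" "p = f e" "q = f e'" using p q by blast
    moreover from this have "e \<noteq> e'" using pq by blast
    ultimately show ?thesis using matching_between_disjointD[OF M] tails by metis
  qed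
  ultimately have "path_packing V E 2 L v (f ` M)" unfolding path_packing_iff by blast
  with tails show ?thesis by blast
qed

lemma path_packing_of_matching:
  assumes M: "matching_between E (nbhd_in E (V - L) v) (T2 V E L v) M"
  obtains P where "path_packing V E 2 L v P" and "card P = card (nbhd_in E L v) + card M"
proof -
  let ?direct = "(\<lambda>u. [v, u]) ` nbhd_in E L v"
  obtain f where detours: "path_packing V E 2 L v (f ` M)"
    and tails: "\<forall>e \<in> M. set (tl (f e)) = e"
    using path_packing_detours_of_matching[OF M] by blast
  have cross: "set (tl p) \<inter> set (tl q) = {}" if p: "p \<in> ?direct" and q: "q \<in> f ` M" for p q
  proof -
    obtain u e where "u \<in> nbhd_in E L v" "p = [v, u]" "e \<in> M" "q = f e" using p q by blast
    then show ?thesis using tails matching_between_disjoint_nbhd_in[OF M] by auto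
  qed
  have "path_packing V E 2 L v (?direct \<union> f ` M)"
    using path_packing_Un[OF path_packing_direct detours cross] .
  moreover have "card (?direct \<union> f ` M) = card (nbhd_in E L v) + card M"
  proof -
    have finite_direct: "finite (nbhd_in E L v)" using finite_nbhd unfolding nbhd_in_def by blast
    have "finite (f ` M)" using path_packing_card_le(1)[OF finite_V detours] .
    moreover have "inj_on f M"
    proof (rule inj_onI)
      fix e e' assume "e \<in> M" "e' \<in> M" "f e = f e'"
      then have "set (tl (f e)) = set (tl (f e'))" by simp
      then show "e = e'" using tails \<open>e \<in> M\<close> \<open>e' \<in> M\<close> by simp
    qed
    moreover have "?direct \<inter> f ` M = {}"
    proof (rule ccontr)
      assume "?direct \<inter> f ` M \<noteq> {}"
      then obtain u where "[v, u] \<in> ?direct" "[v, u] \<in> f ` M" by blast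
      then show False using cross[of "[v, u]" "[v, u]"] by simp
    qed
    ultimately show ?thesis
      using finite_direct by (simp add: card_Un_disjoint card_image inj_on_def)
  qed
  ultimately show ?thesis using that by blast
qed

end

theorem mainTheorem2:
  fixes V :: "'a set" and E :: "'a \<Rightarrow> 'a \<Rightarrow> bool" and L :: "'a set" and v :: 'a
    and M :: "'a set set"
  assumes "simple_graph V E"
    and "L \<subseteq> V"
    and "v \<in> L"
    and "matching_between E (nbhd_in E (V - L) v) (T2 V E L v) M"
  shows "pp V E 2 L v \<ge> card (nbhd_in E L v) + card M
     \<and> ((\<forall>M'. matching_between E (nbhd_in E (V - L) v) (T2 V E L v) M' \<longrightarrow> card M' \<le> card M)
         \<longrightarrow> pp V E 2 L v = card (nbhd_in E L v) + card M)"
proof -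
  have finite: "finite V" using finite_V[OF assms(1)] .
  obtain P where "path_packing V E 2 L v P" "card P = card (nbhd_in E L v) + card M"
    using path_packing_of_matching[OF assms(1,4)] .
  then have lower: "card (nbhd_in E L v) + card M \<le> pp V E 2 L v"
    using pp_ge[OF finite] by metis
  moreover have "pp V E 2 L v = card (nbhd_in E L v) + card M"
    if maximum: "\<forall>M'. matching_between E (nbhd_in E (V - L) v) (T2 V E L v) M' \<longrightarrow> card M' \<le> card M"
  proof -
    obtain P where P: "path_packing V E 2 L v P" "pp V E 2 L v = card P"
      using pp_attained[OF finite] .
    obtain M' where "matching_between E (nbhd_in E (V - L) v) (T2 V E L v) M'"
      and "card P \<le> card (nbhd_in E L v) + card M'"
      using path_packing_card_le_matching[OF assms(1) P(1)] .
    with maximum P(2) lower show ?thesis by fastforce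
  qed
  ultimately show ?thesis by blast
qed

end
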